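(* Let $\langle \mathscr{A} \mid \mathscr{R} \rangle$ be a monoid presentation satisfying $C(2)$, and let $a \in \mathscr{A}$. Then $a$ is either indecomposable or redundant.
   Context: A monoid presentation $\langle \mathscr{A} \mid \mathscr{R} \rangle$ consists of an alphabet $\mathscr{A}$ and a set $\mathscr{R} \subseteq \mathscr{A}^* \times \mathscr{A}^*$ of relations; $\equiv_\mathscr{R}$ is the smallest congruence on $\mathscr{A}^*$ containing $\mathscr{R}$, $[u]$ denotes the class of $u$, and the monoid presented is $\mathscr{A}^*/\equiv_\mathscr{R}$. A relation word is a word occurring as one side of a relation in $\mathscr{R}$. A piece is a word which occurs as a factor of two distinct relation words, or in two different (possibly overlapping) positions within one relation word; the empty word is always a piece. The presentation is $C(n)$ ($n$ a positive integer) if no relation word can be written as a product of strictly fewer than $n$ pieces. A generator $a \in \mathscr{A}$ is redundant if $a$ is $\equiv_\mathscr{R}$-equivalent to a product of zero or more generators other than $a$ (equivalently, the monoid presented is generated by the classes of the letters in $\mathscr{A} \setminus \{a\}$). A non-identity element $s$ of a monoid is indecomposable if whenever $xy = s$ we have $x = 1$ or $y = 1$; a generator $a$ is indecomposable if $[a]$ is indecomposable. *)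

theory Defs
  imports Main
begin

inductive pres_cong :: "('a list \<times> 'a list) set \<Rightarrow> 'a list \<Rightarrow> 'a list \<Rightarrow> bool"
  for R :: "('a list \<times> 'a list) set" where
  rel: "(l, r) \<in> R \<Longrightarrow> pres_cong R l r"
| refl: "pres_cong R u u"
| sym: "pres_cong R u v \<Longrightarrow> pres_cong R v u"
| trans: "pres_cong R u v \<Longrightarrow> pres_cong R v w \<Longrightarrow> pres_cong R u w"
| mult: "pres_cong R u v \<Longrightarrow> pres_cong R (x @ u @ y) (x @ v @ y)"

definition relation_words :: "('a list \<times> 'a list) set \<Rightarrow> 'a list set" where
  "relation_words R = fst ` R \<union> snd ` R"

definition is_factor_at :: "'a list \<Rightarrow> 'a list \<Rightarrow> nat \<Rightarrow> bool" where
  "is_factor_at p w i \<longleftrightarrow> (\<exists>x y. w = x @ p @ y \<and> length x = i)"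

definition is_piece :: "('a list \<times> 'a list) set \<Rightarrow> 'a list \<Rightarrow> bool" where
  "is_piece R p \<longleftrightarrow>
     p = [] \<or>
     (\<exists>w1 \<in> relation_words R. \<exists>w2 \<in> relation_words R. w1 \<noteq> w2 \<and>
         (\<exists>i. is_factor_at p w1 i) \<and> (\<exists>j. is_factor_at p w2 j)) \<or>
     (\<exists>w \<in> relation_words R. \<exists>i j. i \<noteq> j \<and> is_factor_at p w i \<and> is_factor_at p w j)"

definition C_cond :: "nat \<Rightarrow> ('a list \<times> 'a list) set \<Rightarrow> bool" where
  "C_cond n R \<longleftrightarrow>
     (\<forall>w \<in> relation_words R. \<not> (\<exists>ps. length ps < n \<and> (\<forall>p \<in> set ps. is_piece R p) \<and> concat ps = w))"

definition redundant_gen :: "'a set \<Rightarrow> ('a list \<times> 'a list) set \<Rightarrow> 'a \<Rightarrow> bool" where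
  "redundant_gen A R a \<longleftrightarrow> (\<exists>w \<in> lists (A - {a}). pres_cong R [a] w)"

definition indecomposable_gen :: "'a set \<Rightarrow> ('a list \<times> 'a list) set \<Rightarrow> 'a \<Rightarrow> bool" where
  "indecomposable_gen A R a \<longleftrightarrow>
     \<not> pres_cong R [a] [] \<and>
     (\<forall>x \<in> lists A. \<forall>y \<in> lists A. pres_cong R (x @ y) [a] \<longrightarrow>
         pres_cong R x [] \<or> pres_cong R y [])"

end

theory Submission
  imports Defs
begin

text \<open>If some relation has exactly one side equal to the letter \<open>a\<close>, then \<open>[a]\<close> is a
relation word, and by \<open>C(2)\<close> it is not a piece; hence \<open>a\<close> does not occur in the other
side, which therefore witnesses that \<open>a\<close> is redundant. Otherwise no relation involves
the word \<open>a\<close>, and none involves the empty word (already \<open>C(1)\<close> excludes it as a relation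
word), so both congruence classes are singletons and \<open>a\<close> is indecomposable.\<close>

lemma relation_wordsI:
  assumes "(l, r) \<in> R"
  shows "l \<in> relation_words R" "r \<in> relation_words R"
  using assms unfolding relation_words_def by force+

lemma C_cond_relation_word_ne_Nil:
  assumes "C_cond n R" "0 < n" "w \<in> relation_words R"
  shows "w \<noteq> []"
proof
  assume "w = []"
  hence "length [] < n \<and> (\<forall>p \<in> set []. is_piece R p) \<and> concat [] = w" using \<open>0 < n\<close> by simp
  thus False using assms(1,3) unfolding C_cond_def by blast
qed

lemma C_cond_relation_word_not_piece:
  assumes "C_cond n R" "2 \<le> n" "w \<in> relation_words R"
  shows "\<not> is_piece R w"
proof
  assume "is_piece R w"
  hence "length [w] < n \<and> (\<forall>p \<in> set [w]. is_piece R p) \<and> concat [w] = w"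
    using \<open>2 \<le> n\<close> by simp
  thus False using assms unfolding C_cond_def by blast
qed

lemma letter_piece_if_in_other_relation_word:
  assumes "[a] \<in> relation_words R" "r \<in> relation_words R" "r \<noteq> [a]" "a \<in> set r"
  shows "is_piece R [a]"
proof -
  obtain x y where "r = x @ [a] @ y" using \<open>a \<in> set r\<close> by (metis append_Cons append_Nil split_list)
  hence "is_factor_at [a] r (length x)" unfolding is_factor_at_def by blast
  moreover have "is_factor_at [a] [a] 0" unfolding is_factor_at_def by auto
  ultimately show ?thesis unfolding is_piece_def using assms(1-3) by blast
qed

lemma C2_letter_not_in_other_relation_word:
  assumes "C_cond 2 R" "[a] \<in> relation_words R" "r \<in> relation_words R" "r \<noteq> [a]"
  shows "a \<notin> set r"
  using letter_piece_if_in_other_relation_word[OF assms(2-4)]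
    C_cond_relation_word_not_piece[OF assms(1) _ assms(2)] by auto

lemma pres_cong_preserves_Nil_and_letter:
  assumes "pres_cong R u v"
    and "\<And>l r. (l, r) \<in> R \<Longrightarrow> l \<noteq> [] \<and> r \<noteq> []"
    and "\<And>l r. (l, r) \<in> R \<Longrightarrow> l = [a] \<longleftrightarrow> r = [a]"
  shows "(u = [] \<longleftrightarrow> v = []) \<and> (u = [a] \<longleftrightarrow> v = [a])"
  using assms(1)
proof (induction rule: pres_cong.induct)
  case (rel l r)
  thus ?case using assms(2,3) by blast
next
  case (mult u v x y)
  have "x @ u @ y = [] \<longleftrightarrow> x @ v @ y = []" using mult.IH by auto
  moreover have "x @ u @ y = [a] \<longleftrightarrow> x @ v @ y = [a]"
    using mult.IH by (cases x; cases y; cases u; cases v; auto)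
  ultimately show ?case ..
qed auto

lemma indecomposable_gen_if_isolated:
  assumes "\<And>u v. pres_cong R u v \<Longrightarrow> (u = [] \<longleftrightarrow> v = []) \<and> (u = [a] \<longleftrightarrow> v = [a])"
  shows "indecomposable_gen A R a"
  unfolding indecomposable_gen_def
proof (intro conjI ballI impI)
  show "\<not> pres_cong R [a] []" using assms by blast
next
  fix x y assume "pres_cong R (x @ y) [a]"
  hence "x @ y = [a]" using assms by blast
  hence "x = [] \<or> y = []" by (cases x) auto
  thus "pres_cong R x [] \<or> pres_cong R y []" using pres_cong.refl by auto
qed

lemma redundant_gen_if_letter_relation_word:
  assumes "R \<subseteq> lists A \<times> lists A" "C_cond 2 R" "[a] \<in> relation_words R"
    and "r \<in> relation_words R" "r \<noteq> [a]" "pres_cong R [a] r"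
  shows "redundant_gen A R a"
proof -
  have "a \<notin> set r" using C2_letter_not_in_other_relation_word assms(2-5) .
  moreover have "r \<in> lists A" using assms(1,4) unfolding relation_words_def by auto
  ultimately show ?thesis unfolding redundant_gen_def using assms(6) by blast
qed

theorem proposition5:
  fixes A :: "'a set" and R :: "('a list \<times> 'a list) set" and a :: 'a
  assumes "R \<subseteq> lists A \<times> lists A"
    and "C_cond 2 R"
    and "a \<in> A"
  shows "indecomposable_gen A R a \<or> redundant_gen A R a"
proof (cases "\<exists>l r. (l, r) \<in> R \<and> \<not> (l = [a] \<longleftrightarrow> r = [a])")
  case True
  then obtain l r where lr: "(l, r) \<in> R" "\<not> (l = [a] \<longleftrightarrow> r = [a])" by blast
  note words = relation_wordsI[OF lr(1)]
  have lr_cong: "pres_cong R l r" using lr(1) by (rule pres_cong.rel)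
  have "redundant_gen A R a"
  proof (cases "l = [a]")
    case True
    with lr(2) have "r \<noteq> [a]" by blast
    with True words lr_cong show ?thesis
      using redundant_gen_if_letter_relation_word[OF assms(1,2)] by simp
  next
    case False
    with lr(2) have "r = [a]" by blast
    with False words pres_cong.sym[OF lr_cong] show ?thesis
      using redundant_gen_if_letter_relation_word[OF assms(1,2)] by simp
  qed
  thus ?thesis ..
next
  case False
  have "l \<noteq> [] \<and> r \<noteq> []" if "(l, r) \<in> R" for l r
    using C_cond_relation_word_ne_Nil[OF assms(2)] relation_wordsI[OF that] by simp
  with False have "indecomposable_gen A R a"
    by (intro indecomposable_gen_if_isolated pres_cong_preserves_Nil_and_letter) blast+
  thus ?thesis ..
qed

end
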